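(* There exist $a^*\in(0,1/10]$ and $L^*\in(0,1/6)$ with the following properties. Suppose $\Gamma_0^+$ is an $L^*$-flat arc in the upper half-wedge $V_{a^*}\cap\{y>0\}$ whose left endpoint lies on the NW face and whose right endpoint lies on the line $x=2$. Then $\mathbf{W}_+(\Gamma_0^+)$ contains an $L^*$-flat arc $\Gamma_1$ in $V_{a^*}\cap\{y>0\}$ with left endpoint on the NW face and right endpoint on the NE face, and $$\max_{(x,y)\in\Gamma_1}y<\tfrac14\min_{(x,y)\in\Gamma_0^+}y.$$ Moreover, writing $\Gamma_0^+=\{(x,f(x))\}$ and letting the endpoints of $\Gamma_1$ be $\mathbf{W}_+(x_1,f(x_1))$ and $\mathbf{W}_+(x_2,f(x_2))$, the function $\phi(x)=$ first coordinate of $\mathbf{W}_+(x,f(x))$ satisfies $\phi'(x)>1$ for all $x$ between $x_1$ and $x_2$. The analogous statements hold for $\mathbf{W}_-$ acting on an $L^*$-flat arc $\Gamma_0^-$ in the upper half-wedge with left endpoint on the line $x=2$ and right endpoint on the NE face; and, by symmetry under $y\mapsto-y$, analogous statements hold in the lower half-wedge (with $\max y$, $\min y$ replaced by $\max|y|$, $\min|y|$ and NW, NE replaced by SW, SE).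
   Context: For $x>0$, $y\in\mathbb{R}$ let $r_1^2=4+x^2+4x^2y^2$, $\Delta=((x+2)^2+8x^2y^2)((x-2)^2+8x^2y^2)$ and $\omega_\pm(x,y)=\frac{x^2-4\pm\sqrt{\Delta}}{2r_1^2}$. Let $R=\{(x,y): x>0,\ 4-4y^2-x^2y^2-8x^2y^4\ge 0\}$, $R_+=R\cap((0,2]\times\mathbb{R})$, $R_-=R\cap([2,\infty)\times\mathbb{R})$, and $\mathbf{W}_\pm(x,y)=\left(\frac{1+\omega_\pm}{1-\omega_\pm}x,\ \frac{|\omega_\pm|}{1+\omega_\pm}y\right)$ on $R_\pm$. For $0<a\le1/10$, the wedge $V_a=\{(x,y): |y|\le a,\ |y|\ge|x-2|/10\}$; its NW face is $\{y=(2-x)/10,\ 0<y\le a\}$, NE face $\{y=(x-2)/10,\ 0<y\le a\}$, SW face $\{-y=(2-x)/10,\ 0<-y\le a\}$, SE face $\{-y=(x-2)/10,\ 0<-y\le a\}$. An $L$-flat arc in $V_a$ is a graph $\{(x,f(x)):x\in I\}\subset V_a$ of an $L$-Lipschitz function $f:I\to\mathbb{R}$ on a compact interval $I$. *)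

theory Defs
  imports "HOL-Analysis.Analysis"
begin

definition r1sq :: "real \<Rightarrow> real \<Rightarrow> real" where
  "r1sq x y = 4 + x^2 + 4 * x^2 * y^2"

definition Delta :: "real \<Rightarrow> real \<Rightarrow> real" where
  "Delta x y = ((x + 2)^2 + 8 * x^2 * y^2) * ((x - 2)^2 + 8 * x^2 * y^2)"

definition omega_p :: "real \<Rightarrow> real \<Rightarrow> real" where
  "omega_p x y = (x^2 - 4 + sqrt (Delta x y)) / (2 * r1sq x y)"

definition omega_m :: "real \<Rightarrow> real \<Rightarrow> real" where
  "omega_m x y = (x^2 - 4 - sqrt (Delta x y)) / (2 * r1sq x y)"

definition regionR :: "(real \<times> real) set" where
  "regionR = {(x, y). x > 0 \<and> 4 - 4 * y^2 - x^2 * y^2 - 8 * x^2 * y^4 \<ge> 0}"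

definition regionR_p :: "(real \<times> real) set" where
  "regionR_p = regionR \<inter> ({0<..2} \<times> UNIV)"

definition regionR_m :: "(real \<times> real) set" where
  "regionR_m = regionR \<inter> ({2..} \<times> UNIV)"

text \<open>The maps W_+ and W_-, given by their formulas (the paper considers them on R_+ and R_-).\<close>
definition W_p :: "real \<times> real \<Rightarrow> real \<times> real" where
  "W_p p = (case p of (x, y) \<Rightarrow>
     ((1 + omega_p x y) / (1 - omega_p x y) * x, \<bar>omega_p x y\<bar> / (1 + omega_p x y) * y))"

definition W_m :: "real \<times> real \<Rightarrow> real \<times> real" where
  "W_m p = (case p of (x, y) \<Rightarrow>
     ((1 + omega_m x y) / (1 - omega_m x y) * x, \<bar>omega_m x y\<bar> / (1 + omega_m x y) * y))"

definition wedgeV :: "real \<Rightarrow> (real \<times> real) set" where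
  "wedgeV a = {(x, y). \<bar>y\<bar> \<le> a \<and> \<bar>y\<bar> \<ge> \<bar>x - 2\<bar> / 10}"

definition upper_half :: "real \<Rightarrow> (real \<times> real) set" where
  "upper_half a = wedgeV a \<inter> {(x, y). y > 0}"

definition lower_half :: "real \<Rightarrow> (real \<times> real) set" where
  "lower_half a = wedgeV a \<inter> {(x, y). y < 0}"

definition faceNW :: "real \<Rightarrow> (real \<times> real) set" where
  "faceNW a = {(x, y). y = (2 - x) / 10 \<and> 0 < y \<and> y \<le> a}"
definition faceNE :: "real \<Rightarrow> (real \<times> real) set" where
  "faceNE a = {(x, y). y = (x - 2) / 10 \<and> 0 < y \<and> y \<le> a}"
definition faceSW :: "real \<Rightarrow> (real \<times> real) set" where
  "faceSW a = {(x, y). - y = (2 - x) / 10 \<and> 0 < - y \<and> - y \<le> a}"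
definition faceSE :: "real \<Rightarrow> (real \<times> real) set" where
  "faceSE a = {(x, y). - y = (x - 2) / 10 \<and> 0 < - y \<and> - y \<le> a}"

definition line_x2 :: "(real \<times> real) set" where
  "line_x2 = {(x, y). x = 2}"

definition graph_on :: "(real \<Rightarrow> real) \<Rightarrow> real set \<Rightarrow> (real \<times> real) set" where
  "graph_on f I = (\<lambda>x. (x, f x)) ` I"

definition flat_arc :: "real \<Rightarrow> (real \<times> real) set \<Rightarrow> (real \<Rightarrow> real) \<Rightarrow> real \<Rightarrow> real \<Rightarrow> bool" where
  "flat_arc L A f s t \<longleftrightarrow> s \<le> t \<and> L-lipschitz_on {s..t} f \<and> graph_on f {s..t} \<subseteq> A"

definition arc_claim ::
  "(real \<times> real \<Rightarrow> real \<times> real) \<Rightarrow> real \<Rightarrow> (real \<times> real) set \<Rightarrow>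
   (real \<times> real) set \<Rightarrow> (real \<times> real) set \<Rightarrow> (real \<times> real) set \<Rightarrow> (real \<times> real) set \<Rightarrow> bool" where
  "arc_claim W L H A0 B0 A1 B1 \<longleftrightarrow>
    (\<forall>f s t. flat_arc L H f s t \<and> (s, f s) \<in> A0 \<and> (t, f t) \<in> B0 \<longrightarrow>
      (\<exists>g c d. flat_arc L H g c d \<and> (c, g c) \<in> A1 \<and> (d, g d) \<in> B1 \<and>
        graph_on g {c..d} \<subseteq> W ` graph_on f {s..t} \<and>
        (\<forall>p\<in>graph_on g {c..d}. \<forall>q\<in>graph_on f {s..t}. \<bar>snd p\<bar> < \<bar>snd q\<bar> / 4) \<and>
        (\<forall>x1 x2. x1 \<in> {s..t} \<and> x2 \<in> {s..t} \<and> W (x1, f x1) = (c, g c) \<and> W (x2, f x2) = (d, g d) \<longrightarrow>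
           (\<forall>x D. min x1 x2 < x \<and> x < max x1 x2 \<and>
                  ((\<lambda>u. fst (W (u, f u))) has_real_derivative D) (at x) \<longrightarrow> D > 1))))"

end

theory Submission
  imports Defs
begin

(* With r = r1sq x y, the numbers omega_p and omega_m = -nu are the two roots of
   r w^2 - (x^2 - 4) w - 4 x^2 y^2 = 0.  In the wedge near its vertex (2, 0) the constant term
   dominates, so both roots have size between y/4 and 7y: the maps stretch the first coordinate by
   a factor 1 + O(y) and shrink heights to O(y^2).  Along an L-flat arc omega_p increases and nu
   decreases at a definite rate, so the first coordinate phi of the image expands chords by a factor
   m > 1, while the image height changes by at most L times the change of phi.  An arc running from
   a face to the line x = 2 (or back) is mapped to a curve starting left of the NW face and ending
   right of the NE face; as L < 1/10 it crosses each face exactly once, and the piece in between,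
   reparametrized by phi, is the required arc.  We take a = 1/10000 and L = 1/1000; the lower
   half-wedge follows from the symmetry W (x, -y) = (fst (W (x, y)), - snd (W (x, y))). *)

section \<open>The positive root of a quadratic\<close>

definition pos_root :: "real \<Rightarrow> real \<Rightarrow> real \<Rightarrow> real" where
  "pos_root r B C = (B + sqrt (B^2 + 4*r*C)) / (2*r)"

lemma pos_root_eq:
  assumes "r > 0" "C \<ge> 0"
  shows "r * (pos_root r B C)^2 - B * pos_root r B C - C = 0"
proof -
  define S where "S = sqrt (B^2 + 4*r*C)"
  have S2: "S^2 = B^2 + 4*r*C"
    unfolding S_def using assms by (simp add: add_nonneg_nonneg)
  have "r * ((B + S)/(2*r))^2 - B * ((B + S)/(2*r)) - C = (S^2 - B^2 - 4*r*C)/(4*r)"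
    using assms by (simp add: field_simps power2_eq_square)
  also have "\<dots> = 0" using S2 by simp
  finally show ?thesis unfolding pos_root_def S_def .
qed

lemma pos_root_nonneg:
  assumes "r > 0" "C \<ge> 0"
  shows "pos_root r B C \<ge> 0"
proof -
  have "\<bar>B\<bar> \<le> sqrt (B^2 + 4*r*C)"
    using assms real_sqrt_le_mono[of "B^2" "B^2 + 4*r*C"] by simp
  then show ?thesis unfolding pos_root_def using assms by simp
qed

lemma le_pos_root:
  assumes "r > 0" "C \<ge> 0" "r * v^2 - B * v - C \<le> 0"
  shows "v \<le> pos_root r B C"
proof -
  have "2*r * v - B \<le> sqrt (B^2 + 4*r*C)"
  proof (cases "2*r * v - B \<le> 0")
    case False
    have "(2*r * v - B)^2 = B^2 + 4*r*C + 4*r*(r * v^2 - B * v - C)"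
      by (simp add: power2_eq_square algebra_simps)
    also have "\<dots> \<le> B^2 + 4*r*C" using assms by (simp add: mult_nonneg_nonpos)
    finally show ?thesis by (rule real_le_rsqrt)
  qed (use assms in \<open>simp add: add_nonneg_nonneg order_trans[OF _ real_sqrt_ge_zero]\<close>)
  then show ?thesis unfolding pos_root_def using assms by (simp add: pos_le_divide_eq algebra_simps)
qed

lemma pos_root_le:
  assumes "r > 0" "C \<ge> 0" "v > 0" "r * v^2 - B * v - C \<ge> 0"
  shows "pos_root r B C \<le> v"
proof -
  have "2*r * v - B \<ge> 0"
  proof (rule ccontr)
    assume "\<not> 2*r * v - B \<ge> 0"
    moreover have "r * v > 0" using assms by simp
    ultimately have "r * v - B < 0" by linarith
    then have "v * (r * v - B) < 0" using assms by (simp add: mult_pos_neg)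
    moreover have "v * (r * v - B) = r * v^2 - B * v" by (simp add: power2_eq_square algebra_simps)
    ultimately show False using assms by linarith
  qed
  have "B^2 + 4*r*C = (2*r * v - B)^2 - 4*r*(r * v^2 - B * v - C)"
    by (simp add: power2_eq_square algebra_simps)
  also have "\<dots> \<le> (2*r * v - B)^2" using assms by simp
  finally have "sqrt (B^2 + 4*r*C) \<le> 2*r * v - B"
    using \<open>2*r * v - B \<ge> 0\<close> real_sqrt_le_mono by fastforce
  then show ?thesis unfolding pos_root_def using assms by (simp add: pos_divide_le_eq algebra_simps)
qed

section \<open>Arcs crossing the wedge\<close>

lemma upper_half_iff: "(x, y) \<in> upper_half a \<longleftrightarrow> 0 < y \<and> y \<le> a \<and> \<bar>x - 2\<bar> \<le> 10 * y"
  unfolding upper_half_def wedgeV_def by auto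

definition expands_chords ::
  "real \<Rightarrow> real \<Rightarrow> (real \<Rightarrow> real) \<Rightarrow> (real \<Rightarrow> real) \<Rightarrow> real \<Rightarrow> real \<Rightarrow> bool" where
  "expands_chords m L \<phi> \<psi> s t \<longleftrightarrow>
     (\<forall>u v. s \<le> u \<longrightarrow> u < v \<longrightarrow> v \<le> t \<longrightarrow>
        m * (v - u) \<le> \<phi> v - \<phi> u \<and> \<bar>\<psi> v - \<psi> u\<bar> \<le> L * (\<phi> v - \<phi> u))"

lemma expands_chordsD:
  assumes "expands_chords m L \<phi> \<psi> s t" "s \<le> u" "u < v" "v \<le> t"
  shows "m * (v - u) \<le> \<phi> v - \<phi> u" "\<bar>\<psi> v - \<psi> u\<bar> \<le> L * (\<phi> v - \<phi> u)"
  using assms unfolding expands_chords_def by blast+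

lemma expands_chords_subinterval:
  "expands_chords m L \<phi> \<psi> s t \<Longrightarrow> s \<le> s' \<Longrightarrow> t' \<le> t \<Longrightarrow> expands_chords m L \<phi> \<psi> s' t'"
  unfolding expands_chords_def by force

lemma expands_chords_strict_mono_on:
  assumes "expands_chords m L \<phi> \<psi> s t" "0 < m"
  shows "strict_mono_on {s..t} \<phi>"
proof (rule strict_mono_onI)
  fix u v assume "u \<in> {s..t}" "v \<in> {s..t}" "u < v"
  moreover from this have "0 < m * (v - u)" using \<open>0 < m\<close> by simp
  ultimately show "\<phi> u < \<phi> v" using expands_chordsD(1)[OF assms(1)] by fastforce
qed

lemma expands_chords_abs:
  assumes "expands_chords m L \<phi> \<psi> s t" "0 \<le> m" "u \<in> {s..t}" "v \<in> {s..t}"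
  shows "\<bar>\<psi> v - \<psi> u\<bar> \<le> L * \<bar>\<phi> v - \<phi> u\<bar>"
proof -
  have *: "\<bar>\<psi> v - \<psi> u\<bar> \<le> L * \<bar>\<phi> v - \<phi> u\<bar>"
    if "s \<le> u" "u < v" "v \<le> t" for u v
  proof -
    have "0 \<le> m * (v - u)" using \<open>0 \<le> m\<close> \<open>u < v\<close> by simp
    then show ?thesis using expands_chordsD[OF assms(1) that] by simp
  qed
  show ?thesis
    using *[of u v] *[of v u] assms(3,4) by (cases u v rule: linorder_cases) (auto simp: abs_minus_commute)
qed

lemma expands_chords_reparametrize:
  assumes "p \<le> q" "continuous_on {p..q} \<phi>" "expands_chords m L \<phi> \<psi> p q" "0 < m" "0 \<le> L"
  obtains g where "L-lipschitz_on {\<phi> p..\<phi> q} g" "\<phi> ` {p..q} = {\<phi> p..\<phi> q}"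
    "\<And>u. u \<in> {p..q} \<Longrightarrow> g (\<phi> u) = \<psi> u"
proof -
  have mono: "strict_mono_on {p..q} \<phi>"
    using assms(3,4) by (rule expands_chords_strict_mono_on)
  then have inj: "inj_on \<phi> {p..q}"
    by (rule strict_mono_on_imp_inj_on)
  have image: "\<phi> ` {p..q} = {\<phi> p..\<phi> q}"
  proof
    show "\<phi> ` {p..q} \<subseteq> {\<phi> p..\<phi> q}"
      using strict_mono_on_leD[OF mono] \<open>p \<le> q\<close> by fastforce
    show "{\<phi> p..\<phi> q} \<subseteq> \<phi> ` {p..q}"
      using IVT'[of \<phi> p _ q] assms(1,2) by fastforce
  qed
  define g where "g = \<psi> \<circ> inv_into {p..q} \<phi>"
  have g: "g (\<phi> u) = \<psi> u" if "u \<in> {p..q}" for u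
    using inj that by (simp add: g_def)
  have "L-lipschitz_on (\<phi> ` {p..q}) g"
  proof (rule lipschitz_onI)
    fix z z' assume "z \<in> \<phi> ` {p..q}" "z' \<in> \<phi> ` {p..q}"
    then obtain u u' where "u \<in> {p..q}" "u' \<in> {p..q}" "z = \<phi> u" "z' = \<phi> u'" by blast
    then show "dist (g z) (g z') \<le> L * dist z z'"
      using expands_chords_abs[OF assms(3) less_imp_le[OF assms(4)], of u' u] g by (simp add: dist_real_def)
  qed fact
  with image g show ?thesis by (intro that) auto
qed

lemma expands_chords_deriv_ge:
  assumes "expands_chords m L \<phi> \<psi> s t" "s < x" "x < t" "(\<phi> has_real_derivative D) (at x)"
  shows "m \<le> D"
proof -
  have "mono_on {s..t} (\<lambda>u. \<phi> u - m * u)"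
  proof (rule mono_onI)
    fix u v assume "u \<in> {s..t}" "v \<in> {s..t}" "u \<le> v"
    then show "\<phi> u - m * u \<le> \<phi> v - m * v"
      using expands_chordsD(1)[OF assms(1), of u v] by (cases "u = v") (auto simp: algebra_simps)
  qed
  moreover have "((\<lambda>u. \<phi> u - m * u) has_real_derivative D - m) (at x)"
    using assms(4) by (auto intro!: derivative_eq_intros)
  ultimately have "0 \<le> D - m"
    by (rule mono_on_imp_deriv_nonneg) (use assms(2,3) in simp)
  then show ?thesis by simp
qed

definition crosses_wedge ::
  "real \<Rightarrow> real \<Rightarrow> real \<Rightarrow> (real \<Rightarrow> real) \<Rightarrow> (real \<Rightarrow> real) \<Rightarrow> real \<Rightarrow> real \<Rightarrow> bool" where
  "crosses_wedge m L a \<phi> \<psi> s t \<longleftrightarrow> s \<le> t \<and> expands_chords m L \<phi> \<psi> s t \<and>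
     continuous_on {s..t} \<phi> \<and> continuous_on {s..t} \<psi> \<and>
     \<phi> s + 10 * \<psi> s \<le> 2 \<and> 2 \<le> \<phi> t - 10 * \<psi> t \<and> (\<forall>u\<in>{s..t}. 0 < \<psi> u \<and> \<psi> u \<le> a)"

text \<open>Since \<open>L < 1/10\<close>, both \<open>\<phi> + 10 \<psi>\<close> and \<open>\<phi> - 10 \<psi>\<close> are strictly increasing, so the curve
  \<open>(\<phi>, \<psi>)\<close> crosses each of the faces \<open>x \<pm> 10 y = 2\<close> exactly once, the NW face first.\<close>
lemma crosses_wedge_crossings:
  assumes cross: "crosses_wedge m L a \<phi> \<psi> s t" and "0 < m" "L < 1/10"
  obtains x1 x2 where "s \<le> x1" "x1 < x2" "x2 \<le> t" "\<phi> x1 + 10 * \<psi> x1 = 2" "\<phi> x2 - 10 * \<psi> x2 = 2"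
    "\<And>u. u \<in> {x1..x2} \<Longrightarrow> (\<phi> u, \<psi> u) \<in> upper_half a"
proof -
  have st: "s \<le> t" and chords: "expands_chords m L \<phi> \<psi> s t"
    and cont: "continuous_on {s..t} \<phi>" "continuous_on {s..t} \<psi>"
    and left: "\<phi> s + 10 * \<psi> s \<le> 2" and right: "2 \<le> \<phi> t - 10 * \<psi> t"
    and height: "\<And>u. u \<in> {s..t} \<Longrightarrow> 0 < \<psi> u \<and> \<psi> u \<le> a"
    using cross unfolding crosses_wedge_def by auto
  define h1 h2 where "h1 u = \<phi> u + 10 * \<psi> u" and "h2 u = \<phi> u - 10 * \<psi> u" for u
  have h_mono: "h1 u < h1 v \<and> h2 u < h2 v" if "u \<in> {s..t}" "v \<in> {s..t}" "u < v" for u v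
  proof -
    have "\<phi> u < \<phi> v"
      using expands_chords_strict_mono_on[OF chords \<open>0 < m\<close>] that by (simp add: strict_mono_on_def)
    moreover have "\<bar>\<psi> v - \<psi> u\<bar> \<le> L * (\<phi> v - \<phi> u)"
      using expands_chordsD(2)[OF chords, of u v] that by simp
    moreover have "10 * L * (\<phi> v - \<phi> u) < \<phi> v - \<phi> u"
      using \<open>L < 1/10\<close> \<open>\<phi> u < \<phi> v\<close> by simp
    ultimately show ?thesis unfolding h1_def h2_def abs_le_iff by linarith
  qed
  have "continuous_on {s..t} h1" "continuous_on {s..t} h2"
    unfolding h1_def[abs_def] h2_def[abs_def] by (intro continuous_intros cont)+
  moreover have "h1 s \<le> 2" "2 \<le> h1 t" "h2 s \<le> 2" "2 \<le> h2 t"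
    using left right height[of s] height[of t] st unfolding h1_def h2_def by auto
  ultimately obtain x1 x2 where x1: "x1 \<in> {s..t}" "h1 x1 = 2" and x2: "x2 \<in> {s..t}" "h2 x2 = 2"
    using IVT'[of h1 s 2 t] IVT'[of h2 s 2 t] st by auto
  have "h1 x1 < h1 x2"
    using x1 x2 height[of x2] unfolding h1_def h2_def by simp
  then have "x1 < x2"
    using h_mono[OF x2(1) x1(1)] x1 x2 by (cases x1 x2 rule: linorder_cases) auto
  have "(\<phi> u, \<psi> u) \<in> upper_half a" if "u \<in> {x1..x2}" for u
  proof -
    have "h1 x1 \<le> h1 u" "h2 u \<le> h2 x2"
      using h_mono[of x1 u] h_mono[of u x2] that x1 x2 by (cases "x1 = u"; cases "u = x2"; force)+
    then show ?thesis
      using x1 x2 height[of u] that unfolding upper_half_iff h1_def h2_def by auto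
  qed
  with that \<open>x1 < x2\<close> x1 x2 show ?thesis unfolding h1_def h2_def by auto
qed

lemma crosses_wedge_arc:
  assumes cross: "crosses_wedge m L a \<phi> \<psi> s t" and "0 < m" "0 < L" "L < 1/10"
  obtains x1 x2 g where "s \<le> x1" "x1 < x2" "x2 \<le> t" "flat_arc L (upper_half a) g (\<phi> x1) (\<phi> x2)"
    "(\<phi> x1, g (\<phi> x1)) \<in> faceNW a" "(\<phi> x2, g (\<phi> x2)) \<in> faceNE a"
    "graph_on g {\<phi> x1..\<phi> x2} = (\<lambda>u. (\<phi> u, \<psi> u)) ` {x1..x2}"
proof -
  obtain x1 x2 where x12: "s \<le> x1" "x1 < x2" "x2 \<le> t"
    and faces: "\<phi> x1 + 10 * \<psi> x1 = 2" "\<phi> x2 - 10 * \<psi> x2 = 2"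
    and wedge: "\<And>u. u \<in> {x1..x2} \<Longrightarrow> (\<phi> u, \<psi> u) \<in> upper_half a"
    using crosses_wedge_crossings[OF cross \<open>0 < m\<close> \<open>L < 1/10\<close>] by blast
  have chords: "expands_chords m L \<phi> \<psi> x1 x2" and cont: "continuous_on {x1..x2} \<phi>"
    using cross x12 expands_chords_subinterval continuous_on_subset[of "{s..t}" \<phi> "{x1..x2}"]
    unfolding crosses_wedge_def by auto
  obtain g where lip: "L-lipschitz_on {\<phi> x1..\<phi> x2} g" and image: "\<phi> ` {x1..x2} = {\<phi> x1..\<phi> x2}"
    and g: "\<And>u. u \<in> {x1..x2} \<Longrightarrow> g (\<phi> u) = \<psi> u"
    using expands_chords_reparametrize[OF _ cont chords \<open>0 < m\<close>] x12 \<open>0 < L\<close> by auto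
  have graph: "graph_on g {\<phi> x1..\<phi> x2} = (\<lambda>u. (\<phi> u, \<psi> u)) ` {x1..x2}"
    unfolding graph_on_def image[symmetric] image_image using g by (intro image_cong) auto
  have "flat_arc L (upper_half a) g (\<phi> x1) (\<phi> x2)"
    using lip image graph wedge x12 unfolding flat_arc_def by auto
  moreover have "(\<phi> x1, g (\<phi> x1)) \<in> faceNW a" "(\<phi> x2, g (\<phi> x2)) \<in> faceNE a"
    using g[of x1] g[of x2] faces wedge[of x1] wedge[of x2] x12
    unfolding faceNW_def faceNE_def upper_half_iff by auto
  ultimately show ?thesis
    using that x12 graph by blast
qed

lemma arc_claim_upper_halfI:
  assumes "0 < L" "L < 1/10"
    and cross: "\<And>f s t. flat_arc L (upper_half a) f s t \<Longrightarrow> (s, f s) \<in> A0 \<Longrightarrow> (t, f t) \<in> B0 \<Longrightarrow>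
       \<exists>m>1. crosses_wedge m L a (\<lambda>u. fst (W (u, f u))) (\<lambda>u. snd (W (u, f u))) s t \<and>
         (\<forall>u\<in>{s..t}. \<forall>v\<in>{s..t}. snd (W (u, f u)) < \<bar>f v\<bar> / 4)"
  shows "arc_claim W L (upper_half a) A0 B0 (faceNW a) (faceNE a)"
  unfolding arc_claim_def
proof (intro allI impI, goal_cases)
  case (1 f s t)
  then have arc: "flat_arc L (upper_half a) f s t" and "(s, f s) \<in> A0" "(t, f t) \<in> B0" by auto
  define \<phi> where "\<phi> u = fst (W (u, f u))" for u
  define \<psi> where "\<psi> u = snd (W (u, f u))" for u
  obtain m where "1 < m" and cw: "crosses_wedge m L a \<phi> \<psi> s t"
    and lower: "\<And>u v. u \<in> {s..t} \<Longrightarrow> v \<in> {s..t} \<Longrightarrow> \<psi> u < \<bar>f v\<bar> / 4"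
    using cross[OF arc \<open>(s, f s) \<in> A0\<close> \<open>(t, f t) \<in> B0\<close>] unfolding \<phi>_def \<psi>_def by blast
  have "0 < m" using \<open>1 < m\<close> by simp
  obtain x1 x2 g where x12: "s \<le> x1" "x1 < x2" "x2 \<le> t"
    and g: "flat_arc L (upper_half a) g (\<phi> x1) (\<phi> x2)"
      "(\<phi> x1, g (\<phi> x1)) \<in> faceNW a" "(\<phi> x2, g (\<phi> x2)) \<in> faceNE a"
    and graph: "graph_on g {\<phi> x1..\<phi> x2} = (\<lambda>u. (\<phi> u, \<psi> u)) ` {x1..x2}"
    using crosses_wedge_arc[OF cw \<open>0 < m\<close> assms(1,2)] by blast
  have W: "W (u, f u) = (\<phi> u, \<psi> u)" for u unfolding \<phi>_def \<psi>_def by simp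
  have height: "0 < \<psi> u" if "u \<in> {s..t}" for u
    using cw that unfolding crosses_wedge_def by auto
  show ?case
  proof (rule exI[of _ g], rule exI[of _ "\<phi> x1"], rule exI[of _ "\<phi> x2"], intro conjI allI impI ballI)
    show "flat_arc L (upper_half a) g (\<phi> x1) (\<phi> x2)" by (fact g(1))
    show "(\<phi> x1, g (\<phi> x1)) \<in> faceNW a" by (fact g(2))
    show "(\<phi> x2, g (\<phi> x2)) \<in> faceNE a" by (fact g(3))
    show "graph_on g {\<phi> x1..\<phi> x2} \<subseteq> W ` graph_on f {s..t}"
      unfolding graph unfolding graph_on_def W[symmetric] image_image using x12 by auto
  next
    fix p q assume "p \<in> graph_on g {\<phi> x1..\<phi> x2}" "q \<in> graph_on f {s..t}"
    moreover obtain u where "u \<in> {x1..x2}" "p = (\<phi> u, \<psi> u)"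
      using \<open>p \<in> _\<close> unfolding graph by blast
    moreover obtain v where "v \<in> {s..t}" "q = (v, f v)"
      using \<open>q \<in> _\<close> unfolding graph_on_def by blast
    ultimately show "\<bar>snd p\<bar> < \<bar>snd q\<bar> / 4"
      using lower[of u v] height[of u] x12 by simp
  next
    fix y1 y2 x D
    assume "y1 \<in> {s..t} \<and> y2 \<in> {s..t} \<and> W (y1, f y1) = (\<phi> x1, g (\<phi> x1)) \<and> W (y2, f y2) = (\<phi> x2, g (\<phi> x2))"
      and "min y1 y2 < x \<and> x < max y1 y2 \<and> ((\<lambda>u. fst (W (u, f u))) has_real_derivative D) (at x)"
    then have "m \<le> D"
      using cw expands_chords_deriv_ge[of m L \<phi> \<psi> s t x D] unfolding crosses_wedge_def \<phi>_def by auto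
    then show "D > 1" using \<open>1 < m\<close> by simp
  qed
qed

lemma lipschitz_on_interval_diff_le:
  assumes "L-lipschitz_on {s..t} f" "w \<in> {s..t}" "u \<in> {s..t}" "t - s \<le> c"
  shows "\<bar>f u - f w\<bar> \<le> L * c"
proof -
  have "\<bar>f u - f w\<bar> \<le> L * \<bar>u - w\<bar>"
    using lipschitz_onD[OF assms(1,3,2)] by (simp add: dist_real_def)
  also have "\<dots> \<le> L * c"
    using assms lipschitz_on_nonneg[OF assms(1)] by (intro mult_left_mono) auto
  finally show ?thesis .
qed

lemma flat_arc_chord:
  assumes "flat_arc L A f s t" "s \<le> u" "u < v" "v \<le> t"
  shows "\<bar>f v - f u\<bar> \<le> L * (v - u)"
  using lipschitz_onD[of L "{s..t}" f v u] assms unfolding flat_arc_def by (simp add: dist_real_def)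

lemma flat_arc_graph:
  assumes "flat_arc L A f s t" "u \<in> {s..t}"
  shows "(u, f u) \<in> A"
  using assms unfolding flat_arc_def graph_on_def by auto

lemma flat_arc_lower_half_iff:
  "flat_arc L (lower_half a) f s t \<longleftrightarrow> flat_arc L (upper_half a) (\<lambda>x. - f x) s t"
  unfolding flat_arc_def graph_on_def upper_half_def lower_half_def wedgeV_def by auto

lemma arc_claim_lower_halfI:
  assumes W_reflect: "\<And>x y. W (x, - y) = (fst (W (x, y)), - snd (W (x, y)))"
    and claim: "arc_claim W L (upper_half a) A0 B0 A1 B1"
    and "\<And>x y. (x, y) \<in> A0' \<Longrightarrow> (x, - y) \<in> A0" "\<And>x y. (x, y) \<in> B0' \<Longrightarrow> (x, - y) \<in> B0"
    and "\<And>x y. (x, y) \<in> A1 \<Longrightarrow> (x, - y) \<in> A1'" "\<And>x y. (x, y) \<in> B1 \<Longrightarrow> (x, - y) \<in> B1'"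
  shows "arc_claim W L (lower_half a) A0' B0' A1' B1'"
  unfolding arc_claim_def
proof (intro allI impI, goal_cases)
  case (1 f s t)
  define \<rho> :: "real \<times> real \<Rightarrow> real \<times> real" where "\<rho> p = (fst p, - snd p)" for p
  have \<rho>_graph: "graph_on (\<lambda>x. - h x) I = \<rho> ` graph_on h I" for h and I :: "real set"
    unfolding graph_on_def \<rho>_def image_image by simp
  have W_\<rho>: "W (\<rho> p) = \<rho> (W p)" for p
    using W_reflect[of "fst p" "snd p"] unfolding \<rho>_def by simp
  have "flat_arc L (upper_half a) (\<lambda>x. - f x) s t \<and> (s, - f s) \<in> A0 \<and> (t, - f t) \<in> B0"
    using 1 assms(3,4) flat_arc_lower_half_iff by blast
  then obtain g c d where g: "flat_arc L (upper_half a) g c d" "(c, g c) \<in> A1" "(d, g d) \<in> B1"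
    and image: "graph_on g {c..d} \<subseteq> W ` graph_on (\<lambda>x. - f x) {s..t}"
    and lower: "\<forall>p\<in>graph_on g {c..d}. \<forall>q\<in>graph_on (\<lambda>x. - f x) {s..t}. \<bar>snd p\<bar> < \<bar>snd q\<bar> / 4"
    and deriv: "\<forall>x1 x2. x1 \<in> {s..t} \<and> x2 \<in> {s..t} \<and> W (x1, - f x1) = (c, g c) \<and> W (x2, - f x2) = (d, g d) \<longrightarrow>
           (\<forall>x D. min x1 x2 < x \<and> x < max x1 x2 \<and>
                  ((\<lambda>u. fst (W (u, - f u))) has_real_derivative D) (at x) \<longrightarrow> D > 1)"
    using claim unfolding arc_claim_def by blast
  have deriv': "D > 1"
    if "x1 \<in> {s..t}" "x2 \<in> {s..t}" "W (x1, f x1) = (c, - g c)" "W (x2, f x2) = (d, - g d)"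
      "min x1 x2 < x" "x < max x1 x2" "((\<lambda>u. fst (W (u, f u))) has_real_derivative D) (at x)"
    for x1 x2 x D
  proof -
    have "W (x1, - f x1) = (c, g c)" "W (x2, - f x2) = (d, g d)"
      using that(3,4) W_reflect by simp_all
    moreover have "(\<lambda>u. fst (W (u, - f u))) = (\<lambda>u. fst (W (u, f u)))"
      using W_reflect by simp
    ultimately show ?thesis using deriv that by auto
  qed
  show ?case
  proof (rule exI[of _ "\<lambda>x. - g x"], rule exI[of _ c], rule exI[of _ d], intro conjI)
    show "flat_arc L (lower_half a) (\<lambda>x. - g x) c d"
      using g(1) flat_arc_lower_half_iff by simp
    show "(c, - g c) \<in> A1'" "(d, - g d) \<in> B1'"
      using g(2,3) assms(5,6) by auto
    have "\<rho> ` W ` \<rho> ` S = W ` S" for S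
      unfolding image_image W_\<rho> by (simp add: \<rho>_def)
    then show "graph_on (\<lambda>x. - g x) {c..d} \<subseteq> W ` graph_on f {s..t}"
      using image_mono[OF image, of \<rho>] unfolding \<rho>_graph by simp
    show "\<forall>p\<in>graph_on (\<lambda>x. - g x) {c..d}. \<forall>q\<in>graph_on f {s..t}. \<bar>snd p\<bar> < \<bar>snd q\<bar> / 4"
      using lower unfolding \<rho>_graph by (auto simp: graph_on_def \<rho>_def)
  qed (use deriv' in blast)
qed

lemma one_plus_div_one_minus_bounds:
  fixes w :: real assumes "0 \<le> w" "w \<le> 1/3"
  shows "1 + w \<le> (1 + w)/(1 - w)" "(1 + w)/(1 - w) \<le> 1 + 3*w"
proof -
  have "(1 + w)*(1 - w) \<le> 1 + w" using assms by (simp add: algebra_simps)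
  then show "1 + w \<le> (1 + w)/(1 - w)" using assms by (simp add: pos_le_divide_eq)
  have "w * (3*w) \<le> w" using assms mult_left_mono[of "3*w" 1 w] by simp
  then have "1 + w \<le> (1 + 3*w)*(1 - w)" by (simp add: algebra_simps)
  then show "(1 + w)/(1 - w) \<le> 1 + 3*w" using assms by (simp add: pos_divide_le_eq)
qed

lemma div_one_plus_le: "0 \<le> w \<Longrightarrow> w/(1 + w) \<le> (w::real)"
  by (simp add: pos_divide_le_eq algebra_simps)

lemma one_plus_div_one_minus_chord_ge:
  fixes x x' w w' :: real
  assumes "0 \<le> x" "x \<le> x'" "0 \<le> w" "w \<le> w'" "w' < 1"
  shows "(x' - x) * ((1 + w)/(1 - w)) + 2 * x' * (w' - w) \<le> (1 + w')/(1 - w') * x' - (1 + w)/(1 - w) * x"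
proof -
  define H H' where "H = (1 + w)/(1 - w)" and "H' = (1 + w')/(1 - w')"
  have den: "0 < (1 - w)*(1 - w')" "(1 - w)*(1 - w') \<le> 1"
    using assms by (auto intro!: mult_le_one)
  have "H' - H = 2*(w' - w)/((1 - w)*(1 - w'))"
    unfolding H_def H'_def using assms by (simp add: field_simps)
  also have "\<dots> \<ge> 2*(w' - w)"
    using den assms by (simp add: le_divide_eq mult_left_le)
  finally have "x' * (2*(w' - w)) \<le> x' * (H' - H)"
    using assms by (intro mult_left_mono) auto
  moreover have "H'*x' - H*x = (x' - x)*H + x'*(H' - H)" by (simp add: algebra_simps)
  ultimately show ?thesis unfolding H_def H'_def by (simp add: mult.commute mult.left_commute)
qed

lemma div_one_plus_chord_le:
  fixes y y' w w' :: real
  assumes "0 \<le> y" "0 \<le> w" "w \<le> w'"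
  shows "\<bar>w'/(1 + w') * y' - w/(1 + w) * y\<bar> \<le> \<bar>y' - y\<bar> + y * (w' - w)"
proof -
  define J J' where "J = w/(1 + w)" and "J' = w'/(1 + w')"
  have J': "0 \<le> J'" "J' \<le> 1" unfolding J'_def using assms by (auto simp: divide_le_eq)
  have "J' - J = (w' - w)/((1 + w)*(1 + w'))"
    unfolding J_def J'_def using assms by (simp add: field_simps)
  moreover have "1 \<le> (1 + w)*(1 + w')"
    using assms by (simp add: algebra_simps add_increasing)
  ultimately have JJ: "0 \<le> J' - J" "J' - J \<le> w' - w"
    using assms by (auto simp: divide_le_eq mult_le_cancel_left1 intro: order_trans[rotated])
  have "\<bar>J'*(y' - y)\<bar> \<le> \<bar>y' - y\<bar>" using J' by (simp add: abs_mult mult_left_le_one_le)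
  moreover have "\<bar>y*(J' - J)\<bar> \<le> y*(w' - w)" using JJ assms by (simp add: abs_mult mult_left_mono)
  moreover have "J'*y' - J*y = J'*(y' - y) + y*(J' - J)" by (simp add: algebra_simps)
  ultimately show ?thesis unfolding J_def[symmetric] J'_def[symmetric] by linarith
qed

lemma one_minus_div_one_plus_bounds:
  fixes n :: real assumes "0 \<le> n" "n \<le> 1/2"
  shows "1 - 2*n \<le> (1 - n)/(1 + n)" "(1 - n)/(1 + n) \<le> 1 - n" "n/(1 - n) \<le> 2*n"
proof -
  have nn: "n*n \<le> n/2" using mult_left_mono[of n "1/2" n] assms by simp
  have "(1 - 2*n)*(1 + n) \<le> 1 - n" using assms nn by (simp add: algebra_simps)
  then show "1 - 2*n \<le> (1 - n)/(1 + n)" using assms by (simp add: pos_le_divide_eq)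
  have "1 - n \<le> (1 - n)*(1 + n)" using assms nn by (simp add: algebra_simps)
  then show "(1 - n)/(1 + n) \<le> 1 - n" using assms by (simp add: pos_divide_le_eq)
  have "n \<le> 2*n*(1 - n)" using assms nn by (simp add: algebra_simps)
  then show "n/(1 - n) \<le> 2*n" using assms by (simp add: pos_divide_le_eq)
qed

lemma one_minus_div_one_plus_chord_ge:
  fixes x x' n n' :: real
  assumes "0 \<le> x" "x \<le> x'" "0 \<le> n'" "n' \<le> n" "n \<le> 1/1000"
  shows "998/1000 * (x' - x) + 199/100 * x * (n - n') \<le> (1 - n')/(1 + n') * x' - (1 - n)/(1 + n) * x"
proof -
  define G G' where "G = (1 - n)/(1 + n)" and "G' = (1 - n')/(1 + n')"
  have den: "0 < (1 + n)*(1 + n')" "(1 + n)*(1 + n') \<le> 10021/10000"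
    using assms mult_mono[of "1 + n" "1 + 1/1000" "1 + n'" "1 + 1/1000"] by auto
  have "G' - G = 2*(n - n')/((1 + n)*(1 + n'))"
    unfolding G_def G'_def using assms by (simp add: field_simps)
  also have "\<dots> \<ge> 199/100 * (n - n')"
  proof -
    have "199/100 * (n - n') * ((1 + n)*(1 + n')) \<le> 199/100 * (n - n') * (10021/10000)"
      using den assms by (intro mult_left_mono) auto
    also have "\<dots> \<le> 2*(n - n')" using assms by simp
    finally show ?thesis by (subst pos_le_divide_eq[OF den(1)])
  qed
  finally have "x * (199/100 * (n - n')) \<le> x * (G' - G)" using assms by (intro mult_left_mono) auto
  moreover have "998/1000 \<le> G'" unfolding G'_def using assms by (simp add: pos_le_divide_eq)
  then have "(x' - x) * (998/1000) \<le> (x' - x) * G'" using assms by (intro mult_left_mono) auto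
  moreover have "G'*x' - G*x = (x' - x)*G' + x*(G' - G)" by (simp add: algebra_simps)
  moreover have "199/100 * x * (n - n') = x * (199/100 * (n - n'))" by simp
  ultimately show ?thesis unfolding G_def[symmetric] G'_def[symmetric] by linarith
qed

lemma div_one_minus_chord_le:
  fixes y y' n n' :: real
  assumes "0 \<le> y" "0 \<le> n'" "n' \<le> n" "n \<le> 1/1000"
  shows "\<bar>n'/(1 - n') * y' - n/(1 - n) * y\<bar> \<le> 2/1000 * \<bar>y' - y\<bar> + 10021/10000 * y * (n - n')"
proof -
  define J J' where "J = n/(1 - n)" and "J' = n'/(1 - n')"
  have J': "0 \<le> J'" "J' \<le> 2/1000" unfolding J'_def using assms by (auto simp: pos_divide_le_eq)
  have den: "998/1000 \<le> (1 - n)*(1 - n')"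
    using assms mult_mono[of "999/1000" "1 - n" "999/1000" "1 - n'"] by auto
  have "J - J' = (n - n')/((1 - n)*(1 - n'))"
    unfolding J_def J'_def using assms by (simp add: field_simps)
  moreover have "n - n' \<le> 10021/10000 * (n - n') * ((1 - n)*(1 - n'))"
    using mult_left_mono[OF den, of "10021/10000 * (n - n')"] assms by simp
  ultimately have JJ: "0 \<le> J - J'" "J - J' \<le> 10021/10000 * (n - n')"
    using den assms by (simp_all add: pos_divide_le_eq)
  have "\<bar>J'*(y' - y)\<bar> = J' * \<bar>y' - y\<bar>" using J' by (simp add: abs_mult)
  also have "\<dots> \<le> 2/1000 * \<bar>y' - y\<bar>" using J' by (intro mult_right_mono) auto
  finally have "\<bar>J'*(y' - y)\<bar> \<le> 2/1000 * \<bar>y' - y\<bar>" .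
  moreover have "\<bar>y*(J - J')\<bar> \<le> y * (10021/10000 * (n - n'))"
    using JJ assms mult_left_mono[OF JJ(2), of y] by (simp add: abs_mult)
  moreover have "J'*y' - J*y = J'*(y' - y) - y*(J - J')" by (simp add: algebra_simps)
  moreover have "y * (10021/10000 * (n - n')) = 10021/10000 * y * (n - n')" by simp
  ultimately show ?thesis unfolding J_def[symmetric] J'_def[symmetric]
    using abs_triangle_ineq4[of "J'*(y' - y)" "y*(J - J')"] by linarith
qed

section \<open>The maps near the vertex\<close>

lemma r1sq_pos: "r1sq x y > 0"
  unfolding r1sq_def by (simp add: add_pos_nonneg)

lemma Delta_eq: "Delta x y = (x^2 - 4)^2 + 4 * r1sq x y * (4*x^2*y^2)"
  unfolding Delta_def r1sq_def by (simp add: power2_eq_square algebra_simps)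

lemma omega_p_eq_pos_root: "omega_p x y = pos_root (r1sq x y) (x^2 - 4) (4*x^2*y^2)"
  unfolding omega_p_def pos_root_def Delta_eq ..

definition nu :: "real \<Rightarrow> real \<Rightarrow> real" where
  "nu x y = pos_root (r1sq x y) (4 - x^2) (4*x^2*y^2)"

lemma omega_m_eq_neg_nu: "omega_m x y = - nu x y"
  unfolding omega_m_def nu_def pos_root_def Delta_eq power2_commute[of 4 "x^2"]
  by (simp add: minus_divide_left)

lemma nu_nonneg: "nu x y \<ge> 0"
  unfolding nu_def by (rule pos_root_nonneg[OF r1sq_pos]) simp

lemma W_p_eq: "W_p (x, y) = ((1 + omega_p x y) / (1 - omega_p x y) * x, \<bar>omega_p x y\<bar> / (1 + omega_p x y) * y)"
  unfolding W_p_def by simp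

lemma W_m_eq: "W_m (x, y) = ((1 - nu x y) / (1 + nu x y) * x, nu x y / (1 - nu x y) * y)"
  unfolding W_m_def omega_m_eq_neg_nu using nu_nonneg[of x y] by simp

lemma W_p_reflect: "W_p (x, - y) = (fst (W_p (x, y)), - snd (W_p (x, y)))"
  unfolding W_p_def omega_p_def Delta_def r1sq_def by simp

lemma W_m_reflect: "W_m (x, - y) = (fst (W_m (x, y)), - snd (W_m (x, y)))"
  unfolding W_m_def omega_m_def Delta_def r1sq_def by simp

lemma upper_half_bounds:
  assumes "(x, y) \<in> upper_half (1/10000)"
  shows "0 < y" "y \<le> 1/10000" "1999/1000 \<le> x" "x \<le> 2001/1000" "3996/1000 \<le> x^2" "x^2 \<le> 4005/1000"
    "7996/1000 \<le> r1sq x y" "r1sq x y \<le> 801/100" "\<bar>x^2 - 4\<bar> \<le> 41*y"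
proof -
  have y: "0 < y" "y \<le> 1/10000" "\<bar>x - 2\<bar> \<le> 10*y" using assms upper_half_iff by auto
  then show "0 < y" "y \<le> 1/10000" by auto
  show x: "1999/1000 \<le> x" "x \<le> 2001/1000" using y by (auto simp: abs_le_iff)
  have "(1999/1000::real)^2 \<le> x^2" "x^2 \<le> (2001/1000::real)^2"
    using x by (auto intro: power_mono)
  then show x2: "3996/1000 \<le> x^2" "x^2 \<le> 4005/1000" by (simp_all add: power2_eq_square)
  have "4*x^2*y^2 \<ge> 0" by simp
  then show "7996/1000 \<le> r1sq x y" unfolding r1sq_def using x2 by linarith
  have "y^2 \<le> (1/10000)^2" using y by (intro power_mono) auto
  then have "4*x^2*y^2 \<le> 4*(4005/1000)*(1/10000)^2" using x2 by (intro mult_mono) auto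
  then show "r1sq x y \<le> 801/100" unfolding r1sq_def using x2 by (simp add: power2_eq_square)
  have "\<bar>x^2 - 4\<bar> = \<bar>x - 2\<bar> * \<bar>x + 2\<bar>" by (simp add: abs_mult[symmetric] power2_eq_square algebra_simps)
  also have "\<dots> \<le> (10*y) * (4001/1000)" using y x by (intro mult_mono) auto
  finally show "\<bar>x^2 - 4\<bar> \<le> 41*y" using y by simp
qed

text \<open>Near the vertex the constant term \<open>4 x\<^sup>2 y\<^sup>2 \<approx> 16 y\<^sup>2\<close> dominates, so both roots are of order \<open>y\<close>.\<close>
lemma pos_root_upper_half_bounds:
  assumes xy: "(x, y) \<in> upper_half (1/10000)" and B: "\<bar>B\<bar> \<le> 41*y"
  shows "y/4 \<le> pos_root (r1sq x y) B (4*x^2*y^2)" "pos_root (r1sq x y) B (4*x^2*y^2) \<le> 7*y"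
proof -
  note b = upper_half_bounds[OF xy]
  define r where "r = r1sq x y"
  have r: "r > 0" "7996/1000 \<le> r" "r \<le> 801/100" using b r1sq_pos unfolding r_def by auto
  have C: "4*x^2*y^2 \<ge> 0" by simp
  have y2: "y^2 > 0" using b by simp
  have ry: "7996/1000*y^2 \<le> r*y^2" "r*y^2 \<le> 801/100*y^2"
    using r by (intro mult_right_mono; simp)+
  have "\<bar>B\<bar>*y \<le> (41*y)*y" using B b by (intro mult_right_mono) auto
  then have "\<bar>B*y\<bar> \<le> (41*y)*y" using b by (simp add: abs_mult)
  then have By: "-(41*y^2) \<le> B*y" "B*y \<le> 41*y^2" by (auto simp: power2_eq_square abs_le_iff)
  have xy2: "3996/1000*y^2 \<le> x^2*y^2" "x^2*y^2 \<le> 4005/1000*y^2" using b by (auto intro: mult_right_mono)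
  have "r*(y/4)^2 - B*(y/4) - 4*x^2*y^2 = (r*y^2)/16 - (B*y)/4 - 4*(x^2*y^2)"
    by (simp add: power2_eq_square field_simps)
  also have "\<dots> \<le> 0" using ry By xy2 y2 by linarith
  finally show "y/4 \<le> pos_root (r1sq x y) B (4*x^2*y^2)"
    unfolding r_def using le_pos_root[OF r1sq_pos C] by blast
  have "r*(7*y)^2 - B*(7*y) - 4*x^2*y^2 = 49*(r*y^2) - 7*(B*y) - 4*(x^2*y^2)"
    by (simp add: power2_eq_square field_simps)
  also have "\<dots> \<ge> 0" using ry By xy2 y2 by linarith
  finally show "pos_root (r1sq x y) B (4*x^2*y^2) \<le> 7*y"
    unfolding r_def using pos_root_le[OF r1sq_pos C] b by simp
qed

lemma omega_p_bounds:
  assumes "(x, y) \<in> upper_half (1/10000)"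
  shows "y/4 \<le> omega_p x y" "omega_p x y \<le> 7*y"
  using pos_root_upper_half_bounds[OF assms] upper_half_bounds(9)[OF assms]
  unfolding omega_p_eq_pos_root by auto

lemma nu_bounds:
  assumes "(x, y) \<in> upper_half (1/10000)"
  shows "y/4 \<le> nu x y" "nu x y \<le> 7*y"
  using pos_root_upper_half_bounds[OF assms, of "4 - x^2"] upper_half_bounds(9)[OF assms]
  unfolding nu_def by (auto simp: abs_minus_commute)

text \<open>On the faces \<open>x = 2 \<mp> 10 y\<close> the linear coefficient \<open>\<plusminus>(x\<^sup>2 - 4)\<close> equals \<open>-10 y (x + 2)\<close>, which
  pushes the root below \<open>y\<close>.\<close>
lemma pos_root_on_face_le:
  assumes xy: "(x, y) \<in> upper_half (1/10000)" and B: "B = -10*y*(x + 2)"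
  shows "pos_root (r1sq x y) B (4*x^2*y^2) \<le> y"
proof (rule pos_root_le[OF r1sq_pos])
  note b = upper_half_bounds[OF xy]
  have "r1sq x y * y^2 \<ge> 0" using r1sq_pos[of x y] by simp
  moreover have "(x + 2)*y^2 \<ge> 3*y^2" using b by (intro mult_right_mono) auto
  moreover have "x^2*y^2 \<le> 4005/1000*y^2" using b by (intro mult_right_mono) auto
  moreover have "y^2 \<ge> 0" by simp
  ultimately have "r1sq x y * y^2 + 10*((x + 2)*y^2) - 4*(x^2*y^2) \<ge> 0" by linarith
  then show "r1sq x y * y^2 - B * y - 4*x^2*y^2 \<ge> 0"
    unfolding B by (simp add: power2_eq_square algebra_simps)
qed (use upper_half_bounds[OF xy] in auto)

lemma continuous_on_omega:
  assumes "continuous_on S f"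
  shows "continuous_on S (\<lambda>u. omega_p u (f u))" "continuous_on S (\<lambda>u. omega_m u (f u))"
proof -
  have "2 * (4 + u^2 + 4*u^2 * v^2) \<noteq> (0::real)" for u v
    using r1sq_pos[of u v] unfolding r1sq_def by (metis mult_eq_0_iff zero_neq_numeral less_irrefl)
  then show "continuous_on S (\<lambda>u. omega_p u (f u))" "continuous_on S (\<lambda>u. omega_m u (f u))"
    unfolding omega_p_def omega_m_def Delta_def r1sq_def by (intro continuous_intros assms; simp)+
qed

lemma quadratic_height_small:
  fixes h y y' z :: real
  assumes "0 < h" "h \<le> 1/10000" "\<bar>y - h\<bar> \<le> h/100" "\<bar>y' - h\<bar> \<le> h/100" "z \<le> 14 * y^2"
  shows "z \<le> 1/10000" "z < \<bar>y'\<bar>/4"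
proof -
  have "0 \<le> y" "y \<le> 101/100 * h" using assms(1,3) unfolding abs_le_iff by linarith+
  then have "y^2 \<le> (101/100 * h)^2" by (intro power_mono)
  also have "\<dots> \<le> 10201/10000 * h * (1/10000)" using assms by (simp add: power2_eq_square)
  finally have "y^2 \<le> 10201/100000000 * h" by simp
  moreover have "99/100 * h \<le> \<bar>y'\<bar>" using assms(4) by linarith
  ultimately show "z \<le> 1/10000" "z < \<bar>y'\<bar>/4" using assms(1,2,5) by linarith+
qed

section \<open>The map W_p\<close>

text \<open>The quadratic of \<open>\<omega>\<^sub>+\<close> at \<open>(x', y')\<close>, evaluated at \<open>w = \<omega>\<^sub>+ x y\<close>, equals \<open>-(1 - w)\<close> times the
  quantity below. It is nonnegative because along a flat chord \<open>x y\<close> decreases at most slowly while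
  \<open>x\<^sup>2\<close> grows linearly.\<close>
lemma omega_p_shift_nonneg:
  fixes x y x' y' w :: real
  assumes x: "1999/1000 \<le> x" "x < x'" "x' \<le> 2001/1000" and y: "0 < y" "0 < y'"
    and w: "y/4 \<le> w" "w \<le> 1/1000" and chord: "\<bar>y' - y\<bar> \<le> (x' - x)/1000"
  shows "(x'^2 - x^2)*w + 4*(x'^2*y'^2 - x^2*y^2)*(1 + w) \<ge> 0"
proof -
  define d where "d = x' - x"
  have d: "d > 0" "y*d > 0" unfolding d_def using x y by simp_all
  have "(3998/1000)*d \<le> (x' + x)*d" using x d by (intro mult_right_mono) auto
  then have "((3998/1000)*d)*(y/4) \<le> ((x' + x)*d)*w" using w d y by (intro mult_mono) auto
  moreover have "x'^2 - x^2 = (x' + x)*d" unfolding d_def by (simp add: power2_eq_square algebra_simps)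
  ultimately have k1: "(x'^2 - x^2)*w \<ge> (3998/4000)*(y*d)" by (simp add: algebra_simps)
  define P S where "P = x'*y' - x*y" and "S = x'*y' + x*y"
  have PS: "x'^2*y'^2 - x^2*y^2 = P*S" unfolding P_def S_def by (simp add: power2_eq_square algebra_simps)
  have S: "S > 0" unfolding S_def using x y by (simp add: add_pos_pos)
  show ?thesis
  proof (cases "P \<ge> 0")
    case True
    have "0 \<le> w" using w y by linarith
    then have "0 \<le> 4*(P*S)*(1 + w)" using True S by simp
    then show ?thesis unfolding PS using k1 d by linarith
  next
    case False
    have "-(d/1000) \<le> y' - y" using chord unfolding d_def abs_le_iff by linarith
    then have "x'*(-(d/1000)) \<le> x'*(y' - y)" using x by (intro mult_left_mono) auto
    moreover have "P = x'*(y' - y) + y*d" unfolding P_def d_def by (simp add: algebra_simps)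
    ultimately have "-(x'*(d/1000)) \<le> P" using d by simp
    then have "-(x'*(d/1000))*(2*(x*y)) \<le> P*(2*(x*y))" using x y by (intro mult_right_mono) auto
    moreover have "P*(2*(x*y)) \<le> P*S" using False unfolding S_def P_def by (intro mult_left_mono_neg) auto
    moreover have "(x'*x)*(y*d) \<le> (4005/1000)*(y*d)"
      using x d mult_mono[of x' "2001/1000" x "2001/1000"] by (intro mult_right_mono) auto
    ultimately have "P*S \<ge> -(801/100000)*(y*d)" by (simp add: algebra_simps)
    moreover have "(P*S)*(1001/1000) \<le> (P*S)*(1 + w)"
      using False S w by (intro mult_left_mono_neg) (auto simp: mult_nonpos_nonneg)
    ultimately show ?thesis unfolding PS using k1 d by linarith
  qed
qed

lemma omega_p_mono_on_chord:
  assumes xy: "(x, y) \<in> upper_half (1/10000)" and xy': "(x', y') \<in> upper_half (1/10000)"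
    and "x < x'" and chord: "\<bar>y' - y\<bar> \<le> (x' - x)/1000"
  shows "omega_p x y \<le> omega_p x' y'"
proof -
  note b = upper_half_bounds[OF xy] and b' = upper_half_bounds[OF xy']
  define w where "w = omega_p x y"
  have w: "y/4 \<le> w" "w \<le> 1/1000" using omega_p_bounds[OF xy] b unfolding w_def by auto
  have C: "4*x^2*y^2 \<ge> 0" "4*x'^2*y'^2 \<ge> 0" by auto
  have root: "r1sq x y * w^2 - (x^2 - 4) * w - 4*x^2*y^2 = 0"
    unfolding w_def omega_p_eq_pos_root by (rule pos_root_eq[OF r1sq_pos C(1)])
  have "r1sq x' y' * w^2 - (x'^2 - 4) * w - 4*x'^2*y'^2
      = (r1sq x' y' * w^2 - (x'^2 - 4) * w - 4*x'^2*y'^2) - (r1sq x y * w^2 - (x^2 - 4) * w - 4*x^2*y^2)"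
    using root by simp
  also have "\<dots> = -(1 - w)*((x'^2 - x^2)*w + 4*(x'^2*y'^2 - x^2*y^2)*(1 + w))"
    unfolding r1sq_def by (simp add: power2_eq_square algebra_simps)
  also have "\<dots> \<le> 0"
  proof -
    have "0 \<le> (x'^2 - x^2)*w + 4*(x'^2*y'^2 - x^2*y^2)*(1 + w)"
      using omega_p_shift_nonneg[of x x' y y' w] b b' \<open>x < x'\<close> w chord by simp
    moreover have "0 \<le> 1 - w" using w by simp
    ultimately show ?thesis by (metis mult_minus_left mult_nonneg_nonneg neg_le_0_iff_le)
  qed
  finally show ?thesis
    unfolding w_def omega_p_eq_pos_root[of x' y'] by (rule le_pos_root[OF r1sq_pos C(2)])
qed

lemma W_p_chord:
  assumes xy: "(x, y) \<in> upper_half (1/10000)" and xy': "(x', y') \<in> upper_half (1/10000)"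
    and "x < x'" and chord: "\<bar>y' - y\<bar> \<le> (x' - x)/1000"
  shows "(x' - x)*(1 + omega_p x y) \<le> fst (W_p (x', y')) - fst (W_p (x, y))"
    "\<bar>snd (W_p (x', y')) - snd (W_p (x, y))\<bar> \<le> (fst (W_p (x', y')) - fst (W_p (x, y)))/1000"
proof -
  note b = upper_half_bounds[OF xy] and b' = upper_half_bounds[OF xy']
  define w w' where "w = omega_p x y" and "w' = omega_p x' y'"
  have w: "0 \<le> w" "w \<le> w'" "w' \<le> 1/1000"
    using omega_p_bounds[OF xy] omega_p_bounds[OF xy'] omega_p_mono_on_chord[OF assms] b b'
    unfolding w_def w'_def by auto
  define H where "H = (1 + w)/(1 - w)"
  define \<Delta> where "\<Delta> = (1 + w')/(1 - w') * x' - H * x"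
  have H: "1 + w \<le> H" using one_plus_div_one_minus_bounds(1)[of w] w unfolding H_def by simp
  have \<Delta>: "(x' - x)*H + 2 * x' * (w' - w) \<le> \<Delta>"
    using one_plus_div_one_minus_chord_ge[of x x' w w'] b \<open>x < x'\<close> w unfolding H_def \<Delta>_def by simp
  have "(x' - x)*(1 + w) \<le> (x' - x)*H" using H \<open>x < x'\<close> by (intro mult_left_mono) auto
  moreover have "0 \<le> x' * (w' - w)" using w b' by simp
  ultimately show "(x' - x)*(1 + omega_p x y) \<le> fst (W_p (x', y')) - fst (W_p (x, y))"
    using \<Delta> unfolding W_p_eq w_def[symmetric] w'_def[symmetric] H_def[symmetric] \<Delta>_def by simp
  have "(x' - x)*1 \<le> (x' - x)*H" using H w \<open>x < x'\<close> by (intro mult_left_mono) auto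
  moreover have "3998/1000 * (w' - w) \<le> 2 * x' * (w' - w)" using w b' by (intro mult_right_mono) auto
  moreover have "y * (w' - w) \<le> (1/10000) * (w' - w)" using w b by (intro mult_right_mono) auto
  moreover have "\<bar>w'/(1 + w') * y' - w/(1 + w) * y\<bar> \<le> \<bar>y' - y\<bar> + y * (w' - w)"
    using div_one_plus_chord_le[of y w w' y'] b w by simp
  ultimately show "\<bar>snd (W_p (x', y')) - snd (W_p (x, y))\<bar> \<le> (fst (W_p (x', y')) - fst (W_p (x, y)))/1000"
    using \<Delta> chord w unfolding W_p_eq w_def[symmetric] w'_def[symmetric] H_def[symmetric] \<Delta>_def by simp
qed

lemma W_p_NW_face:
  assumes "0 < y" "y \<le> 1/10000"
  shows "fst (W_p (2 - 10*y, y)) + 10 * snd (W_p (2 - 10*y, y)) \<le> 2"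
proof -
  have xy: "(2 - 10*y, y) \<in> upper_half (1/10000)" using assms upper_half_iff by auto
  define w where "w = omega_p (2 - 10*y) y"
  have "w \<le> y"
    using pos_root_on_face_le[OF xy] unfolding w_def omega_p_eq_pos_root
    by (simp add: power2_eq_square algebra_simps)
  moreover have "0 \<le> w" using omega_p_bounds[OF xy] assms unfolding w_def by linarith
  ultimately have w: "0 \<le> w" "w \<le> y" "w \<le> 1/10000" using assms by auto
  have "(1 + w)/(1 - w) * (2 - 10*y) \<le> (1 + 3*w) * (2 - 10*y)"
    using one_plus_div_one_minus_bounds(2)[of w] w assms by (intro mult_right_mono) auto
  also have "\<dots> = (2 - 10*y) + (3*w)*(2 - 10*y)" by (simp add: algebra_simps)
  also have "\<dots> \<le> (2 - 10*y) + (3*y)*2" using w assms by (intro add_left_mono mult_mono) auto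
  finally have "(1 + w)/(1 - w) * (2 - 10*y) \<le> 2 - 4*y" by simp
  moreover have "w/(1 + w) * y \<le> (1/10000) * y"
    using div_one_plus_le[of w] w assms by (intro mult_right_mono) auto
  ultimately show ?thesis
    using assms unfolding W_p_eq fst_conv snd_conv w_def[symmetric] abs_of_nonneg[OF w(1)] by linarith
qed

lemma W_p_line_x2:
  assumes "0 < y" "y \<le> 1/10000"
  shows "2 \<le> fst (W_p (2, y)) - 10 * snd (W_p (2, y))"
proof -
  have xy: "(2, y) \<in> upper_half (1/10000)" using assms upper_half_iff by auto
  define w where "w = omega_p 2 y"
  have w: "0 \<le> w" "w \<le> 1/1000" using omega_p_bounds[OF xy] assms unfolding w_def by auto
  have "(1 + w) * 2 \<le> (1 + w)/(1 - w) * 2"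
    by (rule mult_right_mono[OF one_plus_div_one_minus_bounds(1)]) (use w in auto)
  moreover have "w/(1 + w) * y \<le> w * (1/10000)"
    using div_one_plus_le[of w] w assms by (intro mult_mono) auto
  ultimately show ?thesis using w unfolding W_p_eq w_def[symmetric] by simp
qed

lemma W_p_snd_bounds:
  assumes xy: "(x, y) \<in> upper_half (1/10000)"
  shows "0 < snd (W_p (x, y))" "snd (W_p (x, y)) \<le> 7*y^2"
proof -
  define w where "w = omega_p x y"
  have y: "0 < y" using upper_half_bounds[OF xy] by simp
  have w: "y/4 \<le> w" "w \<le> 7*y" using omega_p_bounds[OF xy] unfolding w_def by auto
  with y show "0 < snd (W_p (x, y))" unfolding W_p_eq w_def[symmetric] by simp
  have "w/(1 + w) * y \<le> (7*y) * y"
    using div_one_plus_le[of w] w y by (intro mult_right_mono) auto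
  then show "snd (W_p (x, y)) \<le> 7*y^2"
    using w y unfolding W_p_eq w_def[symmetric] by (simp add: power2_eq_square)
qed

lemma continuous_on_W_p_graph:
  assumes f: "continuous_on S f" and graph: "\<And>u. u \<in> S \<Longrightarrow> (u, f u) \<in> upper_half (1/10000)"
  shows "continuous_on S (\<lambda>u. fst (W_p (u, f u)))" "continuous_on S (\<lambda>u. snd (W_p (u, f u)))"
proof -
  have "0 < omega_p u (f u) \<and> omega_p u (f u) < 1" if "u \<in> S" for u
    using omega_p_bounds[OF graph[OF that]] upper_half_bounds[OF graph[OF that]] by auto
  then show "continuous_on S (\<lambda>u. fst (W_p (u, f u)))" "continuous_on S (\<lambda>u. snd (W_p (u, f u)))"
    unfolding W_p_eq fst_conv snd_conv
    by (intro continuous_intros continuous_on_omega f; force)+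
qed

section \<open>The map W_m\<close>

lemma sq_prod_chord_le:
  fixes x x' y y' :: real
  assumes x: "1999/1000 \<le> x" "x < x'" "x' \<le> 2001/1000"
    and y: "0 < y" "y \<le> 1/10000" "0 < y'" "y' \<le> 103/100*y" and chord: "\<bar>y' - y\<bar> \<le> (x' - x)/1000"
  shows "x'^2*y'^2 - x^2*y^2 \<le> 86/10000 * (y*(x' - x))"
proof -
  define d P S where "d = x' - x" and "P = x'*y' - x*y" and "S = x'*y' + x*y"
  have d: "0 < d" "0 < y*d" unfolding d_def using x y by simp_all
  have PS: "x'^2*y'^2 - x^2*y^2 = P*S" unfolding P_def S_def by (simp add: power2_eq_square algebra_simps)
  have S: "0 < S" "S \<le> 40621/10000*y"
  proof -
    have "x'*y' \<le> (2001/1000)*((103/100)*y)" using x y by (intro mult_mono) auto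
    moreover have "x*y \<le> (2001/1000)*y" using x y by (intro mult_right_mono) auto
    ultimately show "S \<le> 40621/10000*y" unfolding S_def using y by linarith
    show "0 < S" unfolding S_def using x y by (simp add: add_pos_pos)
  qed
  show ?thesis
  proof (cases "P \<le> 0")
    case True
    then have "P*S \<le> 0" using S(1) by (simp add: mult_nonpos_nonneg)
    then show ?thesis unfolding PS d_def[symmetric] using d by linarith
  next
    case False
    have "y' - y \<le> d/1000" using chord unfolding d_def abs_le_iff by linarith
    then have "x'*(y' - y) \<le> x'*(d/1000)" using x by (intro mult_left_mono) auto
    also have "\<dots> \<le> (2001/1000)*(d/1000)" using x d by (intro mult_right_mono) auto
    finally have "x'*(y' - y) \<le> (2001/1000)*(d/1000)" .
    moreover have "P = x'*(y' - y) + y*d" unfolding P_def d_def by (simp add: algebra_simps)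
    moreover have "y*d \<le> (1/10000)*d" using y d by (intro mult_right_mono) auto
    ultimately have "P \<le> 2101/1000000*d" by linarith
    then have "P*S \<le> (2101/1000000*d)*(40621/10000*y)" using S False by (intro mult_mono) auto
    then show ?thesis unfolding PS d_def[symmetric] using d by (simp add: algebra_simps)
  qed
qed

text \<open>The quadratic of \<open>\<nu>\<close> at \<open>(x', y')\<close>, evaluated at \<open>n - \<delta>\<close> where \<open>n = \<nu> x y\<close>, equals the quantity
  below; the term \<open>(x'\<^sup>2 - x\<^sup>2) n\<close> dominates.\<close>
lemma nu_shift_nonneg:
  fixes x x' y y' n R B' :: real
  assumes x: "1999/1000 \<le> x" "x < x'" "x' \<le> 2001/1000"
    and y: "0 < y" "y \<le> 1/10000" "0 < y'" "y' \<le> 103/100*y" and chord: "\<bar>y' - y\<bar> \<le> (x' - x)/1000"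
    and n: "y/4 \<le> n" "n \<le> 7*y" and R: "0 < R" "R \<le> 801/100" and B': "\<bar>B'\<bar> \<le> 41*y'"
  defines "\<delta> \<equiv> (x' - x)/200"
  shows "(x'^2 - x^2)*(n^2 + n) + 4*(x'^2*y'^2 - x^2*y^2)*(n^2 - 1) - \<delta>*(2*R*n - B') + R*\<delta>^2 \<ge> 0"
proof -
  define d where "d = x' - x"
  have d: "0 < d" "0 < y*d" unfolding d_def using x y by simp_all
  have n0: "0 \<le> n" "n \<le> 1" using n y by linarith+
  have "(3998/1000)*d \<le> (x' + x)*d" using x d by (intro mult_right_mono) auto
  moreover have "y/4 \<le> n^2 + n" using n n0 by (simp add: add_increasing)
  ultimately have "((3998/1000)*d)*(y/4) \<le> ((x' + x)*d)*(n^2 + n)" using y d by (intro mult_mono) auto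
  moreover have "x'^2 - x^2 = (x' + x)*d" unfolding d_def by (simp add: power2_eq_square algebra_simps)
  ultimately have T1: "(3998/4000)*(y*d) \<le> (x'^2 - x^2)*(n^2 + n)" by (simp add: algebra_simps)
  have n2: "-1 \<le> n^2 - 1" "n^2 - 1 \<le> 0" using n0 by (auto simp: power_le_one)
  define K where "K = x'^2*y'^2 - x^2*y^2"
  have K: "K \<le> 86/10000 * (y*d)" using sq_prod_chord_le[OF x y chord] unfolding K_def d_def .
  have T2: "-(35/1000)*(y*d) \<le> 4*K*(n^2 - 1)"
  proof (cases "K \<le> 0")
    case True
    have "0 \<le> 4*K*(n^2 - 1)" using True n2 by (intro mult_nonpos_nonpos) auto
    then show ?thesis using d by linarith
  next
    case False
    have "4*K*(-1) \<le> 4*K*(n^2 - 1)" using False n2 by (intro mult_left_mono) auto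
    then show ?thesis using K d by linarith
  qed
  have "2*R*n - B' \<le> 155*y"
    using R n n0 y B' mult_mono[of R "801/100" n "7*y"] by (simp add: abs_le_iff)
  then have "\<delta>*(2*R*n - B') \<le> \<delta>*(155*y)" using x unfolding \<delta>_def by (intro mult_left_mono) auto
  moreover have "\<delta>*(155*y) = (155/200)*(y*d)" unfolding \<delta>_def d_def by simp
  ultimately have T3: "\<delta>*(2*R*n - B') \<le> (155/200)*(y*d)" by simp
  have "R*\<delta>^2 \<ge> 0" using R by simp
  then show ?thesis using T1 T2 T3 d unfolding K_def by linarith
qed

lemma nu_decreases_on_chord:
  assumes xy: "(x, y) \<in> upper_half (1/10000)" and xy': "(x', y') \<in> upper_half (1/10000)"
    and "x < x'" and chord: "\<bar>y' - y\<bar> \<le> (x' - x)/1000"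
  shows "nu x' y' \<le> nu x y - (x' - x)/200"
proof -
  note b = upper_half_bounds[OF xy] and b' = upper_half_bounds[OF xy']
  define n \<delta> where "n = nu x y" and "\<delta> = (x' - x)/200"
  have n: "y/4 \<le> n" "n \<le> 7*y" using nu_bounds[OF xy] unfolding n_def by auto
  have C: "4*x^2*y^2 \<ge> 0" "4*x'^2*y'^2 \<ge> 0" by auto
  have root: "r1sq x y * n^2 - (4 - x^2) * n - 4*x^2*y^2 = 0"
    unfolding n_def nu_def by (rule pos_root_eq[OF r1sq_pos C(1)])
  have "x' - x \<le> 10*y' + 10*y" using xy xy' unfolding upper_half_iff by (auto simp: abs_le_iff)
  moreover have "y' - y \<le> (x' - x)/1000" using chord unfolding abs_le_iff by linarith
  ultimately have y': "y' \<le> 103/100*y" "\<delta> \<le> 203/2000*y" using b(1) unfolding \<delta>_def by (simp_all add: field_simps)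
  have "r1sq x' y' * (n - \<delta>)^2 - (4 - x'^2) * (n - \<delta>) - 4*x'^2*y'^2
      = (r1sq x' y' * (n - \<delta>)^2 - (4 - x'^2) * (n - \<delta>) - 4*x'^2*y'^2) - (r1sq x y * n^2 - (4 - x^2) * n - 4*x^2*y^2)"
    using root by simp
  also have "\<dots> = (x'^2 - x^2)*(n^2 + n) + 4*(x'^2*y'^2 - x^2*y^2)*(n^2 - 1)
      - \<delta>*(2*r1sq x' y'*n - (4 - x'^2)) + r1sq x' y'*\<delta>^2"
    unfolding r1sq_def by (simp add: power2_eq_square algebra_simps)
  also have "\<dots> \<ge> 0"
    unfolding \<delta>_def by (rule nu_shift_nonneg) (use b b' \<open>x < x'\<close> y' n chord r1sq_pos[of x' y'] in \<open>auto simp: abs_minus_commute\<close>)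
  finally have "nu x' y' \<le> n - \<delta>"
    unfolding nu_def using n y' b by (intro pos_root_le[OF r1sq_pos C(2)]) auto
  then show ?thesis unfolding n_def \<delta>_def .
qed

lemma W_m_chord:
  assumes xy: "(x, y) \<in> upper_half (1/10000)" and xy': "(x', y') \<in> upper_half (1/10000)"
    and "x < x'" and chord: "\<bar>y' - y\<bar> \<le> (x' - x)/1000"
  shows "101/100 * (x' - x) \<le> fst (W_m (x', y')) - fst (W_m (x, y))"
    "\<bar>snd (W_m (x', y')) - snd (W_m (x, y))\<bar> \<le> (fst (W_m (x', y')) - fst (W_m (x, y)))/1000"
proof -
  note b = upper_half_bounds[OF xy]
  define n n' where "n = nu x y" and "n' = nu x' y'"
  define D E where "D = x' - x" and "E = n - n'"
  have n: "0 \<le> n'" "D/200 \<le> E" "n \<le> 1/1000"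
    using nu_nonneg[of x' y'] nu_decreases_on_chord[OF assms] nu_bounds[OF xy] b
    unfolding n_def n'_def D_def E_def by (auto simp: field_simps)
  have D: "0 < D" using \<open>x < x'\<close> unfolding D_def by simp
  define \<Delta> where "\<Delta> = (1 - n')/(1 + n') * x' - (1 - n)/(1 + n) * x"
  have "998/1000 * D + 199/100 * x * E \<le> \<Delta>"
    unfolding \<Delta>_def D_def E_def using one_minus_div_one_plus_chord_ge[of x x' n' n] b n D
    unfolding D_def E_def by simp
  moreover have "397/100 * E \<le> 199/100 * x * E"
    using b n D by (intro mult_right_mono) auto
  ultimately have \<Delta>: "998/1000 * D + 397/100 * E \<le> \<Delta>" by linarith
  then show "101/100 * (x' - x) \<le> fst (W_m (x', y')) - fst (W_m (x, y))"
    using n D unfolding W_m_eq fst_conv n_def[symmetric] n'_def[symmetric] \<Delta>_def[symmetric] D_def[symmetric]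
    by linarith
  have "\<bar>n'/(1 - n') * y' - n/(1 - n) * y\<bar> \<le> 2/1000 * \<bar>y' - y\<bar> + 10021/10000 * (y * E)"
    using div_one_minus_chord_le[of y n' n y'] b n D unfolding E_def by simp
  also have "\<dots> \<le> 2/1000 * (D/1000) + 10021/10000 * (1/10000 * E)"
    using chord b n D unfolding D_def by (intro add_mono mult_left_mono mult_right_mono) auto
  also have "\<dots> \<le> \<Delta>/1000" using \<Delta> n D by linarith
  finally show "\<bar>snd (W_m (x', y')) - snd (W_m (x, y))\<bar> \<le> (fst (W_m (x', y')) - fst (W_m (x, y)))/1000"
    unfolding W_m_eq fst_conv snd_conv n_def[symmetric] n'_def[symmetric] \<Delta>_def[symmetric] .
qed

lemma W_m_line_x2:
  assumes "0 < y" "y \<le> 1/10000"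
  shows "fst (W_m (2, y)) + 10 * snd (W_m (2, y)) \<le> 2"
proof -
  have xy: "(2, y) \<in> upper_half (1/10000)" using assms upper_half_iff by auto
  define n where "n = nu 2 y"
  have n: "0 \<le> n" "n \<le> 1/1000" using nu_bounds[OF xy] assms unfolding n_def by auto
  have "(1 - n)/(1 + n) * 2 \<le> (1 - n) * 2"
    by (rule mult_right_mono[OF one_minus_div_one_plus_bounds(2)]) (use n in auto)
  moreover have "n/(1 - n) * y \<le> (2*n) * (1/10000)"
    using one_minus_div_one_plus_bounds(3)[of n] n assms by (intro mult_mono) auto
  moreover have "(1 - n) * 2 = 2 - 2*n" "(2*n) * (1/10000) = n/5000" by simp_all
  ultimately show ?thesis unfolding W_m_eq fst_conv snd_conv n_def[symmetric] using n by linarith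
qed

lemma W_m_NE_face:
  assumes "0 < y" "y \<le> 1/10000"
  shows "2 \<le> fst (W_m (2 + 10*y, y)) - 10 * snd (W_m (2 + 10*y, y))"
proof -
  have xy: "(2 + 10*y, y) \<in> upper_half (1/10000)" using assms upper_half_iff by auto
  define n where "n = nu (2 + 10*y) y"
  have "n \<le> y"
    using pos_root_on_face_le[OF xy] unfolding n_def nu_def by (simp add: power2_eq_square algebra_simps)
  then have n: "0 \<le> n" "n \<le> y" "n \<le> 1/2" using nu_nonneg assms unfolding n_def by auto
  have "(1 - 2*n) * (2 + 10*y) \<le> (1 - n)/(1 + n) * (2 + 10*y)"
    using one_minus_div_one_plus_bounds(1)[of n] n assms by (intro mult_right_mono) auto
  moreover have "(2*n) * (2 + 10*y) \<le> (2*y) * (2001/1000)" using n assms by (intro mult_mono) auto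
  moreover have "n/(1 - n) * y \<le> (2*y) * (1/10000)"
    using one_minus_div_one_plus_bounds(3)[of n] n assms by (intro mult_mono) auto
  moreover have "(1 - 2*n) * (2 + 10*y) = (2 + 10*y) - (2*n) * (2 + 10*y)" by (simp add: algebra_simps)
  ultimately show ?thesis unfolding W_m_eq fst_conv snd_conv n_def[symmetric] using assms by linarith
qed

lemma W_m_snd_bounds:
  assumes xy: "(x, y) \<in> upper_half (1/10000)"
  shows "0 < snd (W_m (x, y))" "snd (W_m (x, y)) \<le> 14*y^2"
proof -
  define n where "n = nu x y"
  have y: "0 < y" "y \<le> 1/10000" using upper_half_bounds[OF xy] by simp_all
  have n: "y/4 \<le> n" "n \<le> 7*y" using nu_bounds[OF xy] unfolding n_def by auto
  with y show "0 < snd (W_m (x, y))" unfolding W_m_eq n_def[symmetric] by simp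
  have "n/(1 - n) * y \<le> (2*(7*y)) * y"
    using one_minus_div_one_plus_bounds(3)[of n] n y by (intro mult_right_mono) auto
  then show "snd (W_m (x, y)) \<le> 14*y^2" unfolding W_m_eq n_def[symmetric] by (simp add: power2_eq_square)
qed

lemma continuous_on_W_m_graph:
  assumes f: "continuous_on S f" and graph: "\<And>u. u \<in> S \<Longrightarrow> (u, f u) \<in> upper_half (1/10000)"
  shows "continuous_on S (\<lambda>u. fst (W_m (u, f u)))" "continuous_on S (\<lambda>u. snd (W_m (u, f u)))"
proof -
  have "-1 < omega_m u (f u) \<and> omega_m u (f u) < 0" if "u \<in> S" for u
    using nu_bounds[OF graph[OF that]] upper_half_bounds[OF graph[OF that]]
    unfolding omega_m_eq_neg_nu by auto
  then show "continuous_on S (\<lambda>u. fst (W_m (u, f u)))" "continuous_on S (\<lambda>u. snd (W_m (u, f u)))"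
    unfolding W_m_def case_prod_conv fst_conv snd_conv
    by (intro continuous_intros continuous_on_omega f; force)+
qed

lemma W_p_image_crosses_wedge:
  assumes arc: "flat_arc (1/1000) (upper_half (1/10000)) f s t"
    and left: "(s, f s) \<in> faceNW (1/10000)" and right: "(t, f t) \<in> line_x2"
  shows "\<exists>m>1. crosses_wedge m (1/1000) (1/10000) (\<lambda>u. fst (W_p (u, f u))) (\<lambda>u. snd (W_p (u, f u))) s t \<and>
    (\<forall>u\<in>{s..t}. \<forall>v\<in>{s..t}. snd (W_p (u, f u)) < \<bar>f v\<bar> / 4)"
proof -
  define \<phi> \<psi> where "\<phi> = (\<lambda>u. fst (W_p (u, f u)))" and "\<psi> = (\<lambda>u. snd (W_p (u, f u)))"
  have t: "t = 2" and s: "2 - 10 * f s = s" "0 < f s" "f s \<le> 1/10000"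
    using left right unfolding faceNW_def line_x2_def by auto
  have "s \<le> t" and lip: "(1/1000)-lipschitz_on {s..t} f" using arc unfolding flat_arc_def by auto
  have on: "(u, f u) \<in> upper_half (1/10000)" if "u \<in> {s..t}" for u
    using flat_arc_graph[OF arc that] .
  have near: "\<bar>f u - f s\<bar> \<le> f s / 100" if "u \<in> {s..t}" for u
    using lipschitz_on_interval_diff_le[OF lip _ that, of s "10 * f s"] \<open>s \<le> t\<close> s(1) t by simp
  have "expands_chords (1 + f s/8) (1/1000) \<phi> \<psi> s t"
    unfolding expands_chords_def
  proof (intro allI impI)
    fix u v assume uv: "s \<le> u" "u < v" "v \<le> t"
    then have "u \<in> {s..t}" "v \<in> {s..t}" by auto
    moreover have "\<bar>f v - f u\<bar> \<le> (v - u)/1000" using flat_arc_chord[OF arc uv] by simp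
    ultimately have chord: "(v - u)*(1 + omega_p u (f u)) \<le> \<phi> v - \<phi> u" "\<bar>\<psi> v - \<psi> u\<bar> \<le> (\<phi> v - \<phi> u)/1000"
      unfolding \<phi>_def \<psi>_def using W_p_chord[OF on on \<open>u < v\<close>] by blast+
    have "f s / 8 \<le> omega_p u (f u)"
      using omega_p_bounds[OF on] near \<open>u \<in> {s..t}\<close> s(2) unfolding abs_le_iff by fastforce
    then have "(1 + f s/8) * (v - u) \<le> (v - u) * (1 + omega_p u (f u))"
      using uv by (simp add: mult.commute mult_left_mono)
    with chord show "(1 + f s/8) * (v - u) \<le> \<phi> v - \<phi> u \<and> \<bar>\<psi> v - \<psi> u\<bar> \<le> 1/1000 * (\<phi> v - \<phi> u)"
      by simp
  qed
  moreover have "continuous_on {s..t} \<phi>" "continuous_on {s..t} \<psi>"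
    unfolding \<phi>_def \<psi>_def using continuous_on_W_p_graph[OF lipschitz_on_continuous_on[OF lip] on] by auto
  moreover have "\<phi> s + 10 * \<psi> s \<le> 2"
    using W_p_NW_face[OF s(2,3)] unfolding s(1) \<phi>_def \<psi>_def by simp
  moreover have "2 \<le> \<phi> t - 10 * \<psi> t"
    using W_p_line_x2[of "f t"] upper_half_bounds[OF on[of t]] \<open>s \<le> t\<close> unfolding t \<phi>_def \<psi>_def by simp
  moreover have "0 < \<psi> u \<and> \<psi> u \<le> 1/10000 \<and> \<psi> u < \<bar>f v\<bar> / 4" if "u \<in> {s..t}" "v \<in> {s..t}" for u v
    using W_p_snd_bounds[OF on[OF that(1)]] quadratic_height_small[OF s(2,3) near[OF that(1)] near[OF that(2)]]
    unfolding \<psi>_def by simp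
  moreover have "1 < 1 + f s/8" using s by simp
  ultimately show ?thesis
    unfolding \<phi>_def \<psi>_def crosses_wedge_def using \<open>s \<le> t\<close> by blast
qed

lemma W_m_image_crosses_wedge:
  assumes arc: "flat_arc (1/1000) (upper_half (1/10000)) f s t"
    and left: "(s, f s) \<in> line_x2" and right: "(t, f t) \<in> faceNE (1/10000)"
  shows "\<exists>m>1. crosses_wedge m (1/1000) (1/10000) (\<lambda>u. fst (W_m (u, f u))) (\<lambda>u. snd (W_m (u, f u))) s t \<and>
    (\<forall>u\<in>{s..t}. \<forall>v\<in>{s..t}. snd (W_m (u, f u)) < \<bar>f v\<bar> / 4)"
proof -
  define \<phi> \<psi> where "\<phi> = (\<lambda>u. fst (W_m (u, f u)))" and "\<psi> = (\<lambda>u. snd (W_m (u, f u)))"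
  have s: "s = 2" and t: "2 + 10 * f t = t" "0 < f t" "f t \<le> 1/10000"
    using left right unfolding faceNE_def line_x2_def by auto
  have "s \<le> t" and lip: "(1/1000)-lipschitz_on {s..t} f" using arc unfolding flat_arc_def by auto
  have on: "(u, f u) \<in> upper_half (1/10000)" if "u \<in> {s..t}" for u
    using flat_arc_graph[OF arc that] .
  have near: "\<bar>f u - f t\<bar> \<le> f t / 100" if "u \<in> {s..t}" for u
    using lipschitz_on_interval_diff_le[OF lip _ that, of t "10 * f t"] \<open>s \<le> t\<close> s t(1) by simp
  have "expands_chords (101/100) (1/1000) \<phi> \<psi> s t"
    unfolding expands_chords_def
  proof (intro allI impI)
    fix u v assume uv: "s \<le> u" "u < v" "v \<le> t"
    then have "u \<in> {s..t}" "v \<in> {s..t}" by auto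
    moreover have "\<bar>f v - f u\<bar> \<le> (v - u)/1000" using flat_arc_chord[OF arc uv] by simp
    ultimately show "101/100 * (v - u) \<le> \<phi> v - \<phi> u \<and> \<bar>\<psi> v - \<psi> u\<bar> \<le> 1/1000 * (\<phi> v - \<phi> u)"
      unfolding \<phi>_def \<psi>_def using W_m_chord[OF on on \<open>u < v\<close>] by simp
  qed
  moreover have "continuous_on {s..t} \<phi>" "continuous_on {s..t} \<psi>"
    unfolding \<phi>_def \<psi>_def using continuous_on_W_m_graph[OF lipschitz_on_continuous_on[OF lip] on] by auto
  moreover have "\<phi> s + 10 * \<psi> s \<le> 2"
    using W_m_line_x2[of "f s"] upper_half_bounds[OF on[of s]] \<open>s \<le> t\<close> unfolding s \<phi>_def \<psi>_def by simp
  moreover have "2 \<le> \<phi> t - 10 * \<psi> t"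
    using W_m_NE_face[OF t(2,3)] unfolding t(1) \<phi>_def \<psi>_def by simp
  moreover have "0 < \<psi> u \<and> \<psi> u \<le> 1/10000 \<and> \<psi> u < \<bar>f v\<bar> / 4" if "u \<in> {s..t}" "v \<in> {s..t}" for u v
    using W_m_snd_bounds[OF on[OF that(1)]] quadratic_height_small[OF t(2,3) near[OF that(1)] near[OF that(2)]]
    unfolding \<psi>_def by simp
  ultimately show ?thesis
    unfolding \<phi>_def \<psi>_def crosses_wedge_def using \<open>s \<le> t\<close> by (intro exI[of _ "101/100"]) auto
qed

lemma faces_reflect:
  "(x, y) \<in> faceSW a \<Longrightarrow> (x, - y) \<in> faceNW a" "(x, y) \<in> faceSE a \<Longrightarrow> (x, - y) \<in> faceNE a"
  "(x, y) \<in> faceNW a \<Longrightarrow> (x, - y) \<in> faceSW a" "(x, y) \<in> faceNE a \<Longrightarrow> (x, - y) \<in> faceSE a"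
  "(x, y) \<in> line_x2 \<Longrightarrow> (x, - y) \<in> line_x2"
  unfolding faceSW_def faceNW_def faceSE_def faceNE_def line_x2_def by auto

lemma arc_claim_W_p_upper:
  "arc_claim W_p (1/1000) (upper_half (1/10000)) (faceNW (1/10000)) line_x2 (faceNW (1/10000)) (faceNE (1/10000))"
  by (rule arc_claim_upper_halfI, simp, simp, rule W_p_image_crosses_wedge)

lemma arc_claim_W_m_upper:
  "arc_claim W_m (1/1000) (upper_half (1/10000)) line_x2 (faceNE (1/10000)) (faceNW (1/10000)) (faceNE (1/10000))"
  by (rule arc_claim_upper_halfI, simp, simp, rule W_m_image_crosses_wedge)

theorem lemma5p3:
  shows "\<exists>a L. 0 < a \<and> a \<le> 1/10 \<and> 0 < L \<and> L < 1/6 \<and>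
    arc_claim W_p L (upper_half a) (faceNW a) line_x2 (faceNW a) (faceNE a) \<and>
    arc_claim W_m L (upper_half a) line_x2 (faceNE a) (faceNW a) (faceNE a) \<and>
    arc_claim W_p L (lower_half a) (faceSW a) line_x2 (faceSW a) (faceSE a) \<and>
    arc_claim W_m L (lower_half a) line_x2 (faceSE a) (faceSW a) (faceSE a)"
proof (rule exI[of _ "1/10000"], rule exI[of _ "1/1000"], intro conjI)
  show "arc_claim W_p (1/1000) (lower_half (1/10000)) (faceSW (1/10000)) line_x2 (faceSW (1/10000)) (faceSE (1/10000))"
    by (rule arc_claim_lower_halfI[OF W_p_reflect arc_claim_W_p_upper]) (simp_all add: faces_reflect)
  show "arc_claim W_m (1/1000) (lower_half (1/10000)) line_x2 (faceSE (1/10000)) (faceSW (1/10000)) (faceSE (1/10000))"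
    by (rule arc_claim_lower_halfI[OF W_m_reflect arc_claim_W_m_upper]) (simp_all add: faces_reflect)
qed (simp_all add: arc_claim_W_p_upper arc_claim_W_m_upper)

end
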